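(* Let $k\geq2$ and let $L=(l_1,\dots,l_k)$ be generic and reduced positive integers with sum $n$. Let $\Lambda_L=\widehat{\omega}(H_1(Tonn^{n,k}(L);\mathbb{Z}))\subseteq\Lambda$. Then $$\Lambda_L=\Big\{p_1a_1+\dots+p_ka_k : p\in\mathbb{Z}^k,\ \exists p_0\in\mathbb{Z},\ p_1l_1+\dots+p_kl_k=p_0n\Big\},$$ $\Lambda_L$ is free abelian of rank $k-1$, it acts freely by translations on $\mathcal{D}_\Lambda$, and $Tonn^{n,k}(L)$ is isomorphic as a simplicial complex to the quotient $\mathcal{D}_\Lambda/\Lambda_L$.
   Context: The generalized tonnetz $Tonn^{n,k}(L)$ is the simplicial complex on vertex set $\mathbb{Z}_n$ whose maximal simplices are $\Delta(x;\sigma)=\{x,\,x+l_{\sigma(1)},\dots,x+l_{\sigma(1)}+\dots+l_{\sigma(k-1)}\}$ for $x\in\mathbb{Z}_n$, $\sigma\in S_k$. $L$ is generic if for all $I,J\subseteq[k]$, $\sum_{i\in I}l_i=\sum_{j\in J}l_j$ implies $I=J$; reduced if $\gcd(l_1,\dots,l_k)=1$. $a_i=ke_i-(1,\dots,1)\in\mathbb{Z}^k$, $a_I=\sum_{i\in I}a_i$. The vector 1-cocycle $\omega$ assigns to an oriented 1-simplex $(u,v)$ with $v-u\equiv\sum_{j\in I}l_j\pmod n$ ($I$ nonempty, unique by genericity) the vector $a_I$; $\widehat\omega:H_1(Tonn^{n,k}(L);\mathbb{Z})\to\Lambda$ is evaluation of $\omega$ on cycles. $\Lambda=\{x\in\mathbb{Z}^k:\sum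 x_i=0,\text{ all }x_i\text{ congruent mod }k\}$. $\mathcal{D}_\Lambda$ is the simplicial complex with vertex set $\Lambda$ whose simplices are the sets $\{z+a_{I_1},\dots,z+a_{I_s}\}$ with $z\in\Lambda$ and $I_1\subsetneq\dots\subsetneq I_s\subsetneq[k]$ (the Delone triangulation of the hyperplane $\sum x_i=0$). *)

theory Defs
  imports "HOL-Analysis.Analysis"
begin

text \<open>Indices of L are 0..k-1 (the paper uses 1..k). Vectors in Z^k are
  functions nat => int vanishing outside {..<k}. The vertex set Z_n is {0..<n} :: int set.
  Simplicial complexes are given by their sets of nonempty simplices (finite vertex sets).\<close>

definition vec :: "nat \<Rightarrow> (nat \<Rightarrow> int) set" where
  "vec k = {x. \<forall>i. k \<le> i \<longrightarrow> x i = 0}"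

definition vadd :: "(nat \<Rightarrow> int) \<Rightarrow> (nat \<Rightarrow> int) \<Rightarrow> (nat \<Rightarrow> int)" where
  "vadd x y = (\<lambda>i. x i + y i)"

definition avec :: "nat \<Rightarrow> nat \<Rightarrow> (nat \<Rightarrow> int)" where
  "avec k i = (\<lambda>j. if j < k then (if j = i then int k else 0) - 1 else 0)"

definition aset :: "nat \<Rightarrow> nat set \<Rightarrow> (nat \<Rightarrow> int)" where
  "aset k I = (\<lambda>j. \<Sum>i\<in>I. avec k i j)"

definition Lam :: "nat \<Rightarrow> (nat \<Rightarrow> int) set" where
  "Lam k = {x \<in> vec k. (\<Sum>i<k. x i) = 0 \<and> (\<forall>i<k. \<forall>j<k. x i mod int k = x j mod int k)}"

definition generic :: "nat \<Rightarrow> (nat \<Rightarrow> int) \<Rightarrow> bool" where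
  "generic k l \<longleftrightarrow> (\<forall>I J. I \<subseteq> {..<k} \<longrightarrow> J \<subseteq> {..<k} \<longrightarrow>
      (\<Sum>i\<in>I. l i) = (\<Sum>j\<in>J. l j) \<longrightarrow> I = J)"

definition reduced :: "nat \<Rightarrow> (nat \<Rightarrow> int) \<Rightarrow> bool" where
  "reduced k l \<longleftrightarrow> Gcd (l ` {..<k}) = 1"

definition tonn_max :: "int \<Rightarrow> nat \<Rightarrow> (nat \<Rightarrow> int) \<Rightarrow> int \<Rightarrow> (nat \<Rightarrow> nat) \<Rightarrow> int set" where
  "tonn_max n k l x \<sigma> = {(x + (\<Sum>j<m. l (\<sigma> j))) mod n | m. m < k}"

definition tonn :: "int \<Rightarrow> nat \<Rightarrow> (nat \<Rightarrow> int) \<Rightarrow> int set set" where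
  "tonn n k l = {S. S \<noteq> {} \<and> (\<exists>x \<in> {0..<n}. \<exists>\<sigma>. \<sigma> permutes {..<k} \<and> S \<subseteq> tonn_max n k l x \<sigma>)}"

definition omega :: "int \<Rightarrow> nat \<Rightarrow> (nat \<Rightarrow> int) \<Rightarrow> int \<Rightarrow> int \<Rightarrow> (nat \<Rightarrow> int)" where
  "omega n k l u v = aset k (THE I. I \<subseteq> {..<k} \<and> I \<noteq> {} \<and>
       (v - u) mod n = (\<Sum>j\<in>I. l j) mod n)"

text \<open>Integral simplicial 1-cycles of Tonn: integer coefficients on the 1-simplices {u,v},
  oriented as (u,v) with u < v, with vanishing boundary.\<close>
definition tonn_cycles :: "int \<Rightarrow> nat \<Rightarrow> (nat \<Rightarrow> int) \<Rightarrow> (int \<times> int \<Rightarrow> int) set" where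
  "tonn_cycles n k l = {c.
     (\<forall>u v. c (u, v) \<noteq> 0 \<longrightarrow> u \<in> {0..<n} \<and> v \<in> {0..<n} \<and> u < v \<and> {u, v} \<in> tonn n k l) \<and>
     (\<forall>w \<in> {0..<n}. (\<Sum>u\<in>{0..<n}. c (u, w)) - (\<Sum>v\<in>{0..<n}. c (w, v)) = 0)}"

definition omega_eval :: "int \<Rightarrow> nat \<Rightarrow> (nat \<Rightarrow> int) \<Rightarrow> (int \<times> int \<Rightarrow> int) \<Rightarrow> (nat \<Rightarrow> int)" where
  "omega_eval n k l c = (\<lambda>j. \<Sum>u\<in>{0..<n}. \<Sum>v\<in>{0..<n}. c (u, v) * omega n k l u v j)"

text \<open>Lambda_L = image of H_1 under omega-hat (= image of the 1-cycles, as H_1 = Z_1/B_1)\<close>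
definition LamL :: "int \<Rightarrow> nat \<Rightarrow> (nat \<Rightarrow> int) \<Rightarrow> (nat \<Rightarrow> int) set" where
  "LamL n k l = omega_eval n k l ` tonn_cycles n k l"

definition delone :: "nat \<Rightarrow> (nat \<Rightarrow> int) set set" where
  "delone k = {(\<lambda>I. vadd z (aset k I)) ` C | z C. z \<in> Lam k \<and> C \<noteq> {} \<and>
      (\<forall>I\<in>C. I \<subset> {..<k}) \<and> (\<forall>I\<in>C. \<forall>J\<in>C. I \<subseteq> J \<or> J \<subseteq> I)}"

definition free_abelian_rank :: "(nat \<Rightarrow> int) set \<Rightarrow> nat \<Rightarrow> bool" where
  "free_abelian_rank S r \<longleftrightarrow> (\<exists>b :: nat \<Rightarrow> nat \<Rightarrow> int.
      (\<forall>j<r. b j \<in> S) \<and>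
      S = {(\<lambda>i. \<Sum>j<r. c j * b j i) | c. True} \<and>
      (\<forall>c. (\<lambda>i. \<Sum>j<r. c j * b j i) = (\<lambda>i. 0) \<longrightarrow> (\<forall>j<r. c j = 0)))"

definition acts_freely_by_translations ::
  "(nat \<Rightarrow> int) set \<Rightarrow> (nat \<Rightarrow> int) set \<Rightarrow> (nat \<Rightarrow> int) set set \<Rightarrow> bool" where
  "acts_freely_by_translations G V D \<longleftrightarrow>
     (\<forall>g\<in>G. bij_betw (vadd g) V V \<and> (\<forall>S\<subseteq>V. S \<in> D \<longleftrightarrow> vadd g ` S \<in> D)) \<and>
     (\<forall>g\<in>G. \<forall>S\<in>D. vadd g ` S = S \<longrightarrow> g = (\<lambda>i. 0))"

definition orbit :: "(nat \<Rightarrow> int) set \<Rightarrow> (nat \<Rightarrow> int) \<Rightarrow> (nat \<Rightarrow> int) set" where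
  "orbit G x = {vadd x g | g. g \<in> G}"

definition quot_vertices :: "(nat \<Rightarrow> int) set \<Rightarrow> (nat \<Rightarrow> int) set \<Rightarrow> (nat \<Rightarrow> int) set set" where
  "quot_vertices G V = orbit G ` V"

definition quot_simplices :: "(nat \<Rightarrow> int) set \<Rightarrow> (nat \<Rightarrow> int) set set \<Rightarrow> (nat \<Rightarrow> int) set set set" where
  "quot_simplices G D = {orbit G ` S | S. S \<in> D}"

definition simplicial_iso :: "'a set \<Rightarrow> 'a set set \<Rightarrow> 'b set \<Rightarrow> 'b set set \<Rightarrow> ('a \<Rightarrow> 'b) \<Rightarrow> bool" where
  "simplicial_iso V1 K1 V2 K2 f \<longleftrightarrow> bij_betw f V1 V2 \<and> (\<forall>S\<subseteq>V1. S \<in> K1 \<longleftrightarrow> f ` S \<in> K2)"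

end

theory Submission
  imports Defs
begin

text \<open>Every vertex of \<open>\<D>\<^sub>\<Lambda>\<close> is \<open>\<Sum>i. p i * a i\<close>, and \<open>p \<mapsto> \<Sum>i. p i * l i mod n\<close> is well defined on
  \<open>\<Lambda>\<close> because \<open>p\<close> is determined up to a constant vector and the \<open>l i\<close> sum to \<open>n\<close>. This map is a
  simplicial covering \<open>\<D>\<^sub>\<Lambda> \<rightarrow> Tonn\<close>: the simplex \<open>z + a\<^bsub>I\<^sub>1\<^esub>, \<dots>, z + a\<^bsub>I\<^sub>s\<^esub>\<close> goes to the face of the
  maximal simplex of \<open>Tonn\<close> at the image of \<open>z\<close> whose permutation enumerates the chain
  \<open>I\<^sub>1 \<subset> \<dots> \<subset> I\<^sub>s\<close> by initial segments. By Bezout (\<open>L\<close> is reduced) it is onto \<open>\<int>\<^sub>n\<close>, and its fibres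
  are the cosets of its kernel, the lattice of the statement; hence \<open>Tonn \<cong> \<D>\<^sub>\<Lambda>/\<Lambda>\<^sub>L\<close>. The kernel
  contains \<open>n k\<close> times every coordinate vector of \<open>\<Lambda> \<cong> \<int>\<^sup>k\<^sup>-\<^sup>1\<close>, so it is free of rank \<open>k - 1\<close>, and a
  translation fixing a finite nonempty set is trivial (compare coordinate sums).

  By genericity \<open>\<omega>(u, v) = a\<^sub>I\<close> for the unique \<open>I\<close> with \<open>\<Sum>\<^sub>I l i \<equiv> v - u\<close>, so \<open>\<omega>\<close> of a cycle \<open>c\<close> is
  \<open>\<Sum>i. p i * a i\<close> with \<open>\<Sum>i. p i * l i \<equiv> \<Sum> c(u, v) (v - u) = 0\<close>. Conversely \<open>\<Sum>i. p i * a i\<close> with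
  \<open>n\<close> dividing \<open>\<Sum>i. p i * l i\<close> is \<open>\<omega>\<close> of the closed walk from \<open>0\<close> taking \<open>p i + t\<close> steps of length
  \<open>l i\<close> (\<open>t\<close> large enough to make these counts nonnegative).\<close>

section \<open>Coordinates on \<open>\<Lambda>\<close>\<close>

definition avec_comb :: "nat \<Rightarrow> (nat \<Rightarrow> int) \<Rightarrow> nat \<Rightarrow> int" where
  "avec_comb k p = (\<lambda>j. \<Sum>i<k. p i * avec k i j)"

lemma avec_comb_apply:
  "avec_comb k p j = (if j < k then int k * p j - (\<Sum>i<k. p i) else 0)"
proof (cases "j < k")
  case True
  have "avec_comb k p j = (\<Sum>i<k. p i * (if j = i then int k else 0)) - (\<Sum>i<k. p i)"
    unfolding avec_comb_def avec_def using True by (simp add: algebra_simps sum_subtractf)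
  also have "(\<Sum>i<k. p i * (if j = i then int k else 0)) = int k * p j"
    using True by (simp add: if_distrib cong: if_cong)
  finally show ?thesis using True by simp
qed (simp add: avec_comb_def avec_def)

lemma vadd_avec_comb: "vadd (avec_comb k p) (avec_comb k q) = avec_comb k (\<lambda>i. p i + q i)"
  by (simp add: fun_eq_iff vadd_def avec_comb_apply sum.distrib algebra_simps)

lemma uminus_avec_comb: "(\<lambda>i. - avec_comb k p i) = avec_comb k (\<lambda>i. - p i)"
  by (simp add: fun_eq_iff avec_comb_apply sum_negf algebra_simps)

lemma avec_comb_add_const: "avec_comb k (\<lambda>i. p i + t) = avec_comb k p"
  by (simp add: fun_eq_iff avec_comb_apply sum.distrib algebra_simps)

lemma sum_avec_eq_0: "(\<Sum>i<k. avec k i j) = 0"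
  using avec_comb_add_const[of k "\<lambda>_. 0" 1] by (simp add: avec_comb_def fun_eq_iff)

lemma aset_eq_avec_comb:
  assumes "I \<subseteq> {..<k}"
  shows "aset k I = avec_comb k (\<lambda>i. if i \<in> I then 1 else 0)"
proof (rule ext)
  fix j
  have "(\<Sum>i<k. (if i \<in> I then 1 else 0) * avec k i j) = (\<Sum>i\<in>{..<k} \<inter> I. avec k i j)"
    by (simp add: sum.inter_restrict if_distrib[of "\<lambda>c. c * avec k _ j"] cong: if_cong)
  also have "{..<k} \<inter> I = I" using assms by blast
  finally show "aset k I j = avec_comb k (\<lambda>i. if i \<in> I then 1 else 0) j"
    by (simp add: aset_def avec_comb_def)
qed

lemma Lam_eq_range_avec_comb:
  assumes "0 < k"
  shows "Lam k = range (avec_comb k)"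
proof (intro equalityI subsetI)
  fix x assume x: "x \<in> Lam k"
  have x_vec: "\<And>i. k \<le> i \<Longrightarrow> x i = 0" and x_sum: "(\<Sum>i<k. x i) = 0"
    and x_cong: "\<And>i. i < k \<Longrightarrow> int k dvd (x i - x 0)"
    using x assms unfolding Lam_def vec_def by (auto simp: mod_eq_dvd_iff)
  define p where "p = (\<lambda>i. (x i - x 0) div int k)"
  have kp: "\<And>i. i < k \<Longrightarrow> int k * p i = x i - x 0"
    using x_cong by (simp add: p_def)
  have "int k * (\<Sum>i<k. p i) = (\<Sum>i<k. x i - x 0)"
    by (simp add: sum_distrib_left kp)
  also have "\<dots> = int k * (- x 0)" using x_sum by (simp add: sum_subtractf)
  finally have "(\<Sum>i<k. p i) = - x 0" using assms by (simp only: mult_cancel_left) simp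
  then have "x j = avec_comb k p j" for j
    using kp[of j] x_vec[of j] by (cases "j < k") (simp_all add: avec_comb_apply)
  then show "x \<in> range (avec_comb k)" by blast
next
  fix x assume "x \<in> range (avec_comb k)"
  then obtain p where x: "x = avec_comb k p" by blast
  have "(\<Sum>i<k. x i) = (\<Sum>i<k. int k * p i) - int k * (\<Sum>i<k. p i)"
    by (simp add: x avec_comb_apply sum_subtractf)
  also have "\<dots> = 0" by (simp add: sum_distrib_left)
  finally have "(\<Sum>i<k. x i) = 0" .
  moreover have "x i mod int k = x j mod int k" if "i < k" "j < k" for i j
  proof -
    have "x i = (p i - p j) * int k + x j" using that by (simp add: x avec_comb_apply algebra_simps)
    then show ?thesis by simp
  qed
  moreover have "x \<in> vec k" by (simp add: vec_def x avec_comb_apply)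
  ultimately show "x \<in> Lam k" unfolding Lam_def by blast
qed

lemma aset_in_Lam: "0 < k \<Longrightarrow> I \<subseteq> {..<k} \<Longrightarrow> aset k I \<in> Lam k"
  by (simp add: Lam_eq_range_avec_comb aset_eq_avec_comb)

lemma zero_in_Lam: "(\<lambda>_. 0) \<in> Lam k"
  by (simp add: Lam_def vec_def)

lemma vadd_in_Lam:
  assumes "x \<in> Lam k" "y \<in> Lam k"
  shows "vadd x y \<in> Lam k"
proof -
  have "(x i + y i) mod int k = (x j + y j) mod int k" if "i < k" "j < k" for i j
  proof (rule mod_add_cong)
    show "x i mod int k = x j mod int k" "y i mod int k = y j mod int k"
      using assms that unfolding Lam_def by blast+
  qed
  moreover have "(\<Sum>i<k. x i + y i) = 0"
    using assms unfolding Lam_def by (simp add: sum.distrib)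
  moreover have "(\<lambda>i. x i + y i) \<in> vec k"
    using assms unfolding Lam_def vec_def by simp
  ultimately show ?thesis unfolding Lam_def vadd_def by blast
qed

lemma uminus_in_Lam:
  assumes "x \<in> Lam k"
  shows "(\<lambda>i. - x i) \<in> Lam k"
proof -
  have "(- x i) mod int k = (- x j) mod int k" if "i < k" "j < k" for i j
    by (rule mod_minus_cong) (use assms that in \<open>unfold Lam_def, blast\<close>)
  moreover have "(\<Sum>i<k. - x i) = 0"
    using assms unfolding Lam_def by (simp add: sum_negf)
  moreover have "(\<lambda>i. - x i) \<in> vec k"
    using assms unfolding Lam_def vec_def by simp
  ultimately show ?thesis unfolding Lam_def by blast
qed

section \<open>Free subgroups of \<open>\<int>\<^sup>m\<close>\<close>

definition vec_subgroup :: "(nat \<Rightarrow> int) set \<Rightarrow> bool" where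
  "vec_subgroup H \<longleftrightarrow>
     (\<lambda>_. 0) \<in> H \<and> (\<forall>x\<in>H. \<forall>y\<in>H. vadd x y \<in> H) \<and> (\<forall>x\<in>H. (\<lambda>i. - x i) \<in> H)"

lemma vec_subgroup_zero: "vec_subgroup H \<Longrightarrow> (\<lambda>_. 0) \<in> H"
  and vec_subgroup_vadd: "vec_subgroup H \<Longrightarrow> x \<in> H \<Longrightarrow> y \<in> H \<Longrightarrow> vadd x y \<in> H"
  and vec_subgroup_uminus: "vec_subgroup H \<Longrightarrow> x \<in> H \<Longrightarrow> (\<lambda>i. - x i) \<in> H"
  unfolding vec_subgroup_def by blast+

lemma vec_subgroup_diff:
  assumes "vec_subgroup H" "x \<in> H" "y \<in> H"
  shows "(\<lambda>i. x i - y i) \<in> H"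
  using vec_subgroup_vadd[OF assms(1,2) vec_subgroup_uminus[OF assms(1,3)]]
  by (simp add: vadd_def)

lemma vec_subgroup_smult:
  assumes "vec_subgroup H" "x \<in> H"
  shows "(\<lambda>i. t * x i) \<in> H"
proof (induction t rule: int_induct[where k = 0])
  case base
  then show ?case using vec_subgroup_zero[OF assms(1)] by simp
next
  case (step1 t)
  then show ?case
    using vec_subgroup_vadd[OF assms(1) step1(2) assms(2)] by (simp add: vadd_def algebra_simps)
next
  case (step2 t)
  then show ?case
    using vec_subgroup_diff[OF assms(1) step2(2) assms(2)] by (simp add: algebra_simps)
qed

lemma vec_subgroup_lincomb:
  fixes m :: nat
  assumes "vec_subgroup H" "\<forall>j<m. b j \<in> H"
  shows "(\<lambda>i. \<Sum>j<m. c j * b j i) \<in> H"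
  using assms(2)
proof (induction m)
  case 0
  then show ?case using vec_subgroup_zero[OF assms(1)] by simp
next
  case (Suc m)
  then have "vadd (\<lambda>i. \<Sum>j<m. c j * b j i) (\<lambda>i. c m * b m i) \<in> H"
    using vec_subgroup_vadd[OF assms(1)] vec_subgroup_smult[OF assms(1)] by simp
  then show ?case by (simp add: vadd_def)
qed

lemma vec_subgroup_Int_vec: "vec_subgroup H \<Longrightarrow> vec_subgroup (H \<inter> vec m)"
  unfolding vec_subgroup_def vec_def vadd_def by auto

lemma int_subgroup_generator:
  fixes G :: "int set"
  assumes diff: "\<And>y z. y \<in> G \<Longrightarrow> z \<in> G \<Longrightarrow> y - z \<in> G"
    and mult: "\<And>y t. y \<in> G \<Longrightarrow> t * y \<in> G"
    and "d \<in> G" "0 < d"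
  obtains g where "0 < g" "g \<in> G" "\<And>y. y \<in> G \<Longrightarrow> g dvd y"
proof -
  define g0 where "g0 = (LEAST t::nat. 0 < t \<and> int t \<in> G)"
  have ex: "\<exists>t::nat. 0 < t \<and> int t \<in> G"
    using assms(3,4) by (intro exI[of _ "nat d"]) simp
  have g0: "0 < g0" "int g0 \<in> G"
    using LeastI_ex[OF ex] unfolding g0_def by auto
  have g0_min: "g0 \<le> t" if "0 < t" "int t \<in> G" for t
    unfolding g0_def using that by (intro Least_le) simp
  have "int g0 dvd y" if y: "y \<in> G" for y
  proof -
    have r: "y mod int g0 \<in> G"
      using diff[OF y mult[OF g0(2), of "y div int g0"]] by (simp add: minus_div_mult_eq_mod)
    have "y mod int g0 = 0"
    proof (rule ccontr)
      assume "y mod int g0 \<noteq> 0"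
      then have "0 < y mod int g0" using pos_mod_sign[of "int g0" y] g0(1) by linarith
      then have "int g0 \<le> y mod int g0" using g0_min[of "nat (y mod int g0)"] r by simp
      moreover have "y mod int g0 < int g0" using g0(1) by simp
      ultimately show False by linarith
    qed
    then show ?thesis by (simp add: dvd_eq_mod_eq_0)
  qed
  with g0 show ?thesis by (intro that[of "int g0"]) auto
qed

lemma free_abelian_rank_SucI:
  assumes H: "H \<subseteq> vec (Suc m)" "vec_subgroup H"
    and free: "free_abelian_rank (H \<inter> vec m) m"
    and h: "h \<in> H" "0 < h m" "\<And>x. x \<in> H \<Longrightarrow> h m dvd x m"
  shows "free_abelian_rank H (Suc m)"
proof -
  obtain b' where b'_in: "\<forall>j<m. b' j \<in> H \<inter> vec m"
    and b'_span: "H \<inter> vec m = {(\<lambda>i. \<Sum>j<m. c j * b' j i) | c. True}"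
    and b'_indep: "\<forall>c. (\<lambda>i. \<Sum>j<m. c j * b' j i) = (\<lambda>i. 0) \<longrightarrow> (\<forall>j<m. c j = 0)"
    using free unfolding free_abelian_rank_def by blast
  define b where "b = b'(m := h)"
  have b_in: "\<forall>j<Suc m. b j \<in> H"
    using b'_in h(1) by (auto simp: b_def less_Suc_eq)
  have b'_m: "(\<Sum>j<m. c j * b' j m) = 0" for c
    using b'_in by (simp add: vec_def)
  have "x \<in> {(\<lambda>i. \<Sum>j<Suc m. c j * b j i) | c. True}" if x: "x \<in> H" for x
  proof -
    obtain t where t: "x m = t * h m" using h(3)[OF x] by (metis dvdE mult.commute)
    define x' where "x' = (\<lambda>i. x i - t * h i)"
    have x'_H: "x' \<in> H"
      unfolding x'_def by (rule vec_subgroup_diff[OF H(2) x vec_subgroup_smult[OF H(2) h(1)]])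
    have "x' i = 0" if "m \<le> i" for i
    proof (cases "i = m")
      case False
      then have "Suc m \<le> i" using that by simp
      moreover have "x \<in> vec (Suc m)" "h \<in> vec (Suc m)" using H(1) x h(1) by blast+
      ultimately show ?thesis by (simp add: vec_def x'_def)
    qed (simp add: x'_def t)
    then have "x' \<in> vec m" by (simp add: vec_def)
    then obtain c' where c': "x' = (\<lambda>i. \<Sum>j<m. c' j * b' j i)" using b'_span x'_H by blast
    have "x = (\<lambda>i. x' i + t * h i)" by (simp add: x'_def)
    also have "\<dots> = (\<lambda>i. \<Sum>j<Suc m. (c'(m := t)) j * b j i)" by (simp add: c' b_def)
    finally show ?thesis by blast
  qed
  then have span: "H = {(\<lambda>i. \<Sum>j<Suc m. c j * b j i) | c. True}"
    using vec_subgroup_lincomb[OF H(2) b_in] by blast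
  have indep: "\<forall>j<Suc m. c j = 0" if z: "(\<lambda>i. \<Sum>j<Suc m. c j * b j i) = (\<lambda>i. 0)" for c
  proof -
    have "c m * h m = 0" using fun_cong[OF z, of m] b'_m[of c] by (simp add: b_def)
    then have cm: "c m = 0" using h(2) by simp
    then have "(\<lambda>i. \<Sum>j<m. c j * b' j i) = (\<lambda>i. 0)"
      using z by (simp add: b_def fun_eq_iff)
    then show ?thesis using b'_indep cm less_Suc_eq by auto
  qed
  show ?thesis
    unfolding free_abelian_rank_def using b_in span indep by blast
qed

lemma free_abelian_rank_if_multiples_of_units:
  assumes "H \<subseteq> vec m" "vec_subgroup H" "0 < d"
    and "\<forall>i<m. (\<lambda>j. if j = i then d else 0) \<in> H"
  shows "free_abelian_rank H m"
  using assms(1,2,4)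
proof (induction m arbitrary: H)
  case 0
  then have "H = {\<lambda>_. 0}" using vec_subgroup_zero by (auto simp: vec_def)
  then show ?case unfolding free_abelian_rank_def by simp
next
  case (Suc m)
  have "free_abelian_rank (H \<inter> vec m) m"
    using Suc.prems by (intro Suc.IH vec_subgroup_Int_vec) (auto simp: vec_def)
  moreover obtain g where g: "0 < g" "g \<in> (\<lambda>x. x m) ` H" "\<And>y. y \<in> (\<lambda>x. x m) ` H \<Longrightarrow> g dvd y"
  proof (rule int_subgroup_generator[of "(\<lambda>x. x m) ` H" d])
    show "y - z \<in> (\<lambda>x. x m) ` H" if "y \<in> (\<lambda>x. x m) ` H" "z \<in> (\<lambda>x. x m) ` H" for y z
      using that vec_subgroup_diff[OF Suc.prems(2)] by (auto intro: image_eqI)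
    show "t * y \<in> (\<lambda>x. x m) ` H" if "y \<in> (\<lambda>x. x m) ` H" for y t
      using that vec_subgroup_smult[OF Suc.prems(2)] by (auto intro: image_eqI)
    show "d \<in> (\<lambda>x. x m) ` H"
      using Suc.prems(3) by (auto intro!: image_eqI[of _ _ "\<lambda>j. if j = m then d else 0"])
  qed (use assms(3) in auto)
  moreover obtain h where "h \<in> H" "g = h m" using g(2) by blast
  ultimately show ?case
    using Suc.prems(1,2) g by (intro free_abelian_rank_SucI[of H m h]) auto
qed

definition truncate :: "nat \<Rightarrow> (nat \<Rightarrow> int) \<Rightarrow> nat \<Rightarrow> int" where
  "truncate m x = (\<lambda>i. if i < m then x i else 0)"

definition zero_sum_extension :: "nat \<Rightarrow> (nat \<Rightarrow> int) \<Rightarrow> nat \<Rightarrow> int" where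
  "zero_sum_extension m y = (\<lambda>i. if i < m then y i else if i = m then - (\<Sum>j<m. y j) else 0)"

lemma zero_sum_extension_truncate:
  assumes "x \<in> Lam (Suc m)"
  shows "zero_sum_extension m (truncate m x) = x"
proof -
  have "x i = 0" if "Suc m \<le> i" for i using assms that unfolding Lam_def vec_def by blast
  moreover have "x m = - (\<Sum>i<m. x i)" using assms unfolding Lam_def by simp
  ultimately show ?thesis
    by (auto simp: fun_eq_iff zero_sum_extension_def truncate_def not_less le_Suc_eq)
qed

lemma truncate_lincomb:
  "truncate m (\<lambda>i. \<Sum>j<r. c j * b j i) = (\<lambda>i. \<Sum>j<r. c j * truncate m (b j) i)"
  by (simp add: truncate_def fun_eq_iff)

lemma zero_sum_extension_lincomb:
  "zero_sum_extension m (\<lambda>i. \<Sum>j<r. c j * b j i) = (\<lambda>i. \<Sum>j<r. c j * zero_sum_extension m (b j) i)"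
proof -
  have "(\<Sum>i<m. \<Sum>j<r. c j * b j i) = (\<Sum>j<r. c j * (\<Sum>i<m. b j i))"
    by (subst sum.swap) (simp add: sum_distrib_left)
  then show ?thesis by (simp add: zero_sum_extension_def fun_eq_iff sum_negf)
qed

lemma vec_subgroup_truncate: "vec_subgroup H \<Longrightarrow> vec_subgroup (truncate m ` H)"
  unfolding vec_subgroup_def
  by (auto simp: truncate_def vadd_def fun_eq_iff intro!: image_eqI)

lemma free_abelian_rank_of_truncate:
  assumes "H \<subseteq> Lam (Suc m)" and free: "free_abelian_rank (truncate m ` H) r"
  shows "free_abelian_rank H r"
proof -
  obtain B where B_in: "\<forall>j<r. B j \<in> truncate m ` H"
    and B_span: "truncate m ` H = {(\<lambda>i. \<Sum>j<r. c j * B j i) | c. True}"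
    and B_indep: "\<forall>c. (\<lambda>i. \<Sum>j<r. c j * B j i) = (\<lambda>i. 0) \<longrightarrow> (\<forall>j<r. c j = 0)"
    using free unfolding free_abelian_rank_def by blast
  have ext_trunc: "zero_sum_extension m (truncate m x) = x" if "x \<in> H" for x
    using that assms(1) zero_sum_extension_truncate by blast
  define b where "b = (\<lambda>j. zero_sum_extension m (B j))"
  have truncate_b: "truncate m (b j) = B j" if "j < r" for j
    using B_in that ext_trunc by (auto simp: b_def)
  have b_in: "\<forall>j<r. b j \<in> H" using B_in ext_trunc by (auto simp: b_def)
  have "x \<in> H \<longleftrightarrow> (\<exists>c. x = (\<lambda>i. \<Sum>j<r. c j * b j i))" for x
  proof
    assume "x \<in> H"
    then obtain c where "truncate m x = (\<lambda>i. \<Sum>j<r. c j * B j i)" using B_span by blast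
    then have "x = (\<lambda>i. \<Sum>j<r. c j * b j i)"
      using ext_trunc[OF \<open>x \<in> H\<close>] by (simp add: zero_sum_extension_lincomb b_def)
    then show "\<exists>c. x = (\<lambda>i. \<Sum>j<r. c j * b j i)" by blast
  next
    assume "\<exists>c. x = (\<lambda>i. \<Sum>j<r. c j * b j i)"
    then obtain c where x: "x = (\<lambda>i. \<Sum>j<r. c j * b j i)" by blast
    obtain y where "y \<in> H" "(\<lambda>i. \<Sum>j<r. c j * B j i) = truncate m y" using B_span by blast
    then show "x \<in> H"
      using ext_trunc by (simp add: x b_def flip: zero_sum_extension_lincomb)
  qed
  then have span: "H = {(\<lambda>i. \<Sum>j<r. c j * b j i) | c. True}" by blast
  have "\<forall>j<r. c j = 0" if "(\<lambda>i. \<Sum>j<r. c j * b j i) = (\<lambda>i. 0)" for c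
  proof -
    have "(\<lambda>i. \<Sum>j<r. c j * B j i) = truncate m (\<lambda>i. \<Sum>j<r. c j * b j i)"
      by (simp add: truncate_lincomb truncate_b)
    also have "\<dots> = (\<lambda>i. 0)" by (simp add: that truncate_def)
    finally show ?thesis using B_indep by blast
  qed
  then show ?thesis unfolding free_abelian_rank_def using b_in span by blast
qed

section \<open>Translations of the Delone complex\<close>

lemma vadd_image_eq_imp_zero:
  assumes "vadd g ` S = S" "finite S" "S \<noteq> {}"
  shows "g = (\<lambda>_. 0)"
proof
  fix j
  have "inj_on (vadd g) S" by (rule inj_onI) (simp add: vadd_def fun_eq_iff)
  then have "(\<Sum>s\<in>S. s j) = (\<Sum>s\<in>S. vadd g s j)"
    using sum.reindex[of "vadd g" S "\<lambda>s. s j"] assms(1) by simp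
  also have "\<dots> = (\<Sum>s\<in>S. s j) + int (card S) * g j" by (simp add: vadd_def sum.distrib)
  finally show "g j = 0" using assms(2,3) by simp
qed

lemma delone_cases:
  assumes "T \<in> delone k"
  obtains z C where "T = (\<lambda>I. vadd z (aset k I)) ` C" "z \<in> Lam k" "C \<noteq> {}"
    "\<forall>I\<in>C. I \<subset> {..<k}" "\<forall>I\<in>C. \<forall>J\<in>C. I \<subseteq> J \<or> J \<subseteq> I"
  using assms unfolding delone_def mem_Collect_eq by (elim exE conjE) blast

lemma delone_finite_nonempty:
  assumes "T \<in> delone k"
  shows "finite T" "T \<noteq> {}"
proof -
  obtain z C where T: "T = (\<lambda>I. vadd z (aset k I)) ` C" "C \<noteq> {}" "\<forall>I\<in>C. I \<subset> {..<k}"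
    using assms by (rule delone_cases)
  have "C \<subseteq> Pow {..<k}" using T(3) by blast
  then have "finite C" by (rule finite_subset) simp
  then show "finite T" using T(1) by simp
  show "T \<noteq> {}" using T(1,2) by simp
qed

lemma image_vadd_aset_in_delone:
  assumes "z \<in> Lam k" "C \<noteq> {}" "\<forall>I\<in>C. I \<subset> {..<k}" "\<forall>I\<in>C. \<forall>J\<in>C. I \<subseteq> J \<or> J \<subseteq> I"
  shows "(\<lambda>I. vadd z (aset k I)) ` C \<in> delone k"
  unfolding delone_def using assms by blast

lemma vadd_image_delone:
  assumes "T \<in> delone k" "h \<in> Lam k"
  shows "vadd h ` T \<in> delone k"
proof -
  obtain z C where T: "T = (\<lambda>I. vadd z (aset k I)) ` C" "z \<in> Lam k" "C \<noteq> {}"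
    "\<forall>I\<in>C. I \<subset> {..<k}" "\<forall>I\<in>C. \<forall>J\<in>C. I \<subseteq> J \<or> J \<subseteq> I"
    using assms(1) by (rule delone_cases)
  have "vadd h ` T = (\<lambda>I. vadd (vadd h z) (aset k I)) ` C"
    unfolding T(1) image_image by (simp add: vadd_def add.assoc)
  moreover have "vadd h z \<in> Lam k" using assms(2) T(2) by (rule vadd_in_Lam)
  ultimately show ?thesis using image_vadd_aset_in_delone T(3-5) by metis
qed

lemma acts_freely_by_translations_delone:
  assumes "G \<subseteq> Lam k" "\<And>g. g \<in> G \<Longrightarrow> (\<lambda>i. - g i) \<in> G"
  shows "acts_freely_by_translations G (Lam k) (delone k)"
proof -
  have "bij_betw (vadd g) (Lam k) (Lam k) \<and> (\<forall>S. S \<in> delone k \<longleftrightarrow> vadd g ` S \<in> delone k)"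
    if g: "g \<in> G" for g
  proof -
    have inv: "vadd (\<lambda>i. - g i) (vadd g a) = a" "vadd g (vadd (\<lambda>i. - g i) a) = a" for a
      by (simp_all add: vadd_def)
    have gL: "g \<in> Lam k" "(\<lambda>i. - g i) \<in> Lam k" using assms g by blast+
    have "bij_betw (vadd g) (Lam k) (Lam k)"
      by (rule bij_betw_byWitness[where f' = "vadd (\<lambda>i. - g i)"])
        (use inv vadd_in_Lam gL in auto)
    moreover have "S \<in> delone k" if "vadd g ` S \<in> delone k" for S
      using vadd_image_delone[OF that gL(2)] by (simp add: image_image inv)
    ultimately show ?thesis using vadd_image_delone gL(1) by blast
  qed
  moreover have "g = (\<lambda>_. 0)" if "S \<in> delone k" "vadd g ` S = S" for g S
    using vadd_image_eq_imp_zero[OF that(2) delone_finite_nonempty[OF that(1)]] .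
  ultimately show ?thesis unfolding acts_freely_by_translations_def by blast
qed

section \<open>The covering map and its deck group\<close>

locale tonnetz_params =
  fixes k :: nat and l :: "nat \<Rightarrow> int" and n :: int
  assumes two_le_k: "2 \<le> k"
    and l_pos: "\<forall>i<k. 0 < l i"
    and l_generic: "generic k l"
    and l_reduced: "reduced k l"
    and n_eq_sum: "n = (\<Sum>i<k. l i)"
begin

lemma k_pos: "0 < k"
  using two_le_k by simp

lemma l_less_n:
  assumes "i < k"
  shows "l i < n"
proof -
  define j where "j = (if i = 0 then 1 else (0::nat))"
  have j: "j < k" "j \<noteq> i" using two_le_k by (auto simp: j_def)
  have "n = l i + (\<Sum>x\<in>{..<k} - {i}. l x)"
    unfolding n_eq_sum using assms by (simp add: sum.remove)
  moreover have "l j \<le> (\<Sum>x\<in>{..<k} - {i}. l x)"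
    using j l_pos by (intro member_le_sum) (auto intro: less_imp_le)
  ultimately show ?thesis using l_pos j by force
qed

lemma n_pos: "0 < n"
  using l_less_n l_pos k_pos by force

definition deck :: "(nat \<Rightarrow> int) set" where
  "deck = {avec_comb k p | p. \<exists>p0. (\<Sum>i<k. p i * l i) = p0 * n}"

text \<open>For \<open>x = \<Sum>i. p i * a i\<close> the quotient \<open>(x i - x 0) div k\<close> is \<open>p i - p 0\<close>; dropping \<open>p 0\<close>
  changes the sum by a multiple of \<open>n\<close>.\<close>
definition cover :: "(nat \<Rightarrow> int) \<Rightarrow> int" where
  "cover x = (\<Sum>i<k. ((x i - x 0) div int k) * l i) mod n"

lemma cover_avec_comb: "cover (avec_comb k p) = (\<Sum>i<k. p i * l i) mod n"
proof -
  have "(avec_comb k p i - avec_comb k p 0) div int k = p i - p 0" if "i < k" for i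
    using that k_pos by (simp add: avec_comb_apply algebra_simps)
  then have "(\<Sum>i<k. ((avec_comb k p i - avec_comb k p 0) div int k) * l i)
      = (\<Sum>i<k. (p i - p 0) * l i)"
    by simp
  also have "\<dots> = (\<Sum>i<k. p i * l i) + (- p 0) * n"
    by (simp add: n_eq_sum left_diff_distrib sum_subtractf sum_distrib_left sum_negf)
  finally show ?thesis unfolding cover_def by (simp only: mod_mult_self1)
qed

lemma cover_range: "cover x \<in> {0..<n}"
  using n_pos by (simp add: cover_def)

lemma Lam_eq: "Lam k = range (avec_comb k)"
  using Lam_eq_range_avec_comb[OF k_pos] .

lemma deck_subset_Lam: "deck \<subseteq> Lam k"
  unfolding deck_def Lam_eq by blast

lemma mem_deck_iff:
  assumes "x \<in> Lam k"
  shows "x \<in> deck \<longleftrightarrow> cover x = 0"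
proof
  assume "x \<in> deck"
  then obtain p p0 where "x = avec_comb k p" "(\<Sum>i<k. p i * l i) = p0 * n"
    unfolding deck_def by blast
  then show "cover x = 0" by (simp add: cover_avec_comb)
next
  assume "cover x = 0"
  obtain p where x: "x = avec_comb k p" using assms Lam_eq by blast
  with \<open>cover x = 0\<close> have "n dvd (\<Sum>i<k. p i * l i)"
    by (simp add: cover_avec_comb dvd_eq_mod_eq_0)
  then obtain p0 where "(\<Sum>i<k. p i * l i) = p0 * n" by (metis dvdE mult.commute)
  then show "x \<in> deck" unfolding deck_def x by blast
qed

lemma cover_vadd:
  assumes "x \<in> Lam k" "y \<in> Lam k"
  shows "cover (vadd x y) = (cover x + cover y) mod n"
proof -
  obtain p q where "x = avec_comb k p" "y = avec_comb k q" using assms Lam_eq by blast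
  then show ?thesis
    by (simp add: vadd_avec_comb cover_avec_comb sum.distrib algebra_simps mod_add_eq)
qed

lemma cover_uminus:
  assumes "x \<in> Lam k"
  shows "cover (\<lambda>i. - x i) = (- cover x) mod n"
proof -
  obtain p where "x = avec_comb k p" using assms Lam_eq by blast
  then show ?thesis by (simp add: uminus_avec_comb cover_avec_comb sum_negf mod_minus_eq)
qed

lemma vec_subgroup_deck: "vec_subgroup deck"
  unfolding vec_subgroup_def
proof (intro conjI ballI)
  show "(\<lambda>_. 0) \<in> deck"
    using mem_deck_iff[OF zero_in_Lam] by (simp add: cover_def)
  show "vadd x y \<in> deck" if "x \<in> deck" "y \<in> deck" for x y
  proof -
    have "x \<in> Lam k" "y \<in> Lam k" using that deck_subset_Lam by blast+
    moreover have "cover x = 0" "cover y = 0" using that mem_deck_iff calculation by blast+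
    ultimately show ?thesis using mem_deck_iff[OF vadd_in_Lam] cover_vadd by simp
  qed
  show "(\<lambda>i. - x i) \<in> deck" if "x \<in> deck" for x
  proof -
    have "x \<in> Lam k" using that deck_subset_Lam by blast
    moreover have "cover x = 0" using that mem_deck_iff calculation by blast
    ultimately show ?thesis using mem_deck_iff[OF uminus_in_Lam] cover_uminus by simp
  qed
qed

lemma orbit_eq_iff_cover_eq:
  assumes "x \<in> Lam k" "y \<in> Lam k"
  shows "orbit deck x = orbit deck y \<longleftrightarrow> cover x = cover y"
proof -
  define d where "d = vadd y (\<lambda>i. - x i)"
  have d: "d \<in> Lam k" "y = vadd x d"
    using vadd_in_Lam[OF assms(2) uminus_in_Lam[OF assms(1)]] by (simp_all add: d_def vadd_def)
  have "cover y = (cover x + cover d) mod n" using cover_vadd[OF assms(1) d(1)] d(2) by simp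
  then have "cover x = cover y \<longleftrightarrow> (cover x + cover d) mod n = cover x mod n"
    using cover_range[of x] by auto
  also have "\<dots> \<longleftrightarrow> n dvd cover d" by (simp add: mod_eq_dvd_iff)
  also have "\<dots> \<longleftrightarrow> cover d = 0" using cover_range[of d] by (auto dest: zdvd_imp_le)
  finally have cover_d: "cover d = 0 \<longleftrightarrow> cover x = cover y" by simp
  have "orbit deck x = orbit deck y \<longleftrightarrow> d \<in> deck"
  proof
    assume "orbit deck x = orbit deck y"
    moreover have "y \<in> orbit deck y"
      using vec_subgroup_zero[OF vec_subgroup_deck] by (force simp: orbit_def vadd_def)
    ultimately obtain g where "g \<in> deck" "y = vadd x g" unfolding orbit_def by blast
    moreover from this d(2) have "d = g" by (simp add: vadd_def fun_eq_iff)
    ultimately show "d \<in> deck" by simp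
  next
    assume "d \<in> deck"
    have "vadd y g = vadd x (vadd d g)" "vadd x g = vadd y (vadd (\<lambda>i. - d i) g)" for g
      using d(2) by (simp_all add: vadd_def fun_eq_iff)
    then show "orbit deck x = orbit deck y"
      unfolding orbit_def
      using \<open>d \<in> deck\<close> vec_subgroup_vadd[OF vec_subgroup_deck] vec_subgroup_uminus[OF vec_subgroup_deck]
      by blast
  qed
  then show ?thesis using mem_deck_iff[OF d(1)] cover_d by simp
qed

lemma multiples_of_units_in_truncated_deck:
  assumes "i < k - 1"
  shows "(\<lambda>j. if j = i then n * int k else 0) \<in> truncate (k - 1) ` deck"
proof -
  define p where "p = (\<lambda>j. (if j = i then n else 0) - (if j = k - 1 then n else (0::int)))"
  have i: "i < k" "k - 1 < k" "i \<noteq> k - 1" using assms k_pos by auto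
  have "(\<Sum>j<k. p j * l j) = (l i - l (k - 1)) * n"
    using i by (simp add: p_def left_diff_distrib sum_subtractf if_distrib[of "\<lambda>c. c * _"]
      cong: if_cong)
  then have "avec_comb k p \<in> deck" unfolding deck_def by blast
  moreover have "(\<Sum>j<k. p j) = 0" using i by (simp add: p_def sum_subtractf)
  then have "truncate (k - 1) (avec_comb k p) = (\<lambda>j. if j = i then n * int k else 0)"
    using i by (auto simp: truncate_def avec_comb_apply p_def fun_eq_iff)
  ultimately show ?thesis by (metis image_eqI)
qed

lemma free_abelian_rank_deck: "free_abelian_rank deck (k - 1)"
proof (rule free_abelian_rank_of_truncate)
  show "deck \<subseteq> Lam (Suc (k - 1))" using deck_subset_Lam k_pos by simp
  show "free_abelian_rank (truncate (k - 1) ` deck) (k - 1)"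
  proof (rule free_abelian_rank_if_multiples_of_units)
    show "truncate (k - 1) ` deck \<subseteq> vec (k - 1)" by (auto simp: truncate_def vec_def)
    show "vec_subgroup (truncate (k - 1) ` deck)" by (rule vec_subgroup_truncate[OF vec_subgroup_deck])
    show "0 < n * int k" using n_pos k_pos by simp
  qed (use multiples_of_units_in_truncated_deck in blast)
qed

lemma acts_freely_deck: "acts_freely_by_translations deck (Lam k) (delone k)"
  using acts_freely_by_translations_delone deck_subset_Lam vec_subgroup_uminus[OF vec_subgroup_deck] .

end

section \<open>The tonnetz as a quotient of the Delone complex\<close>

lemma bezout_Gcd_image:
  fixes f :: "nat \<Rightarrow> int"
  shows "\<exists>q. (\<Sum>i<m. q i * f i) = Gcd (f ` {..<m})"
proof (induction m)
  case 0
  then show ?case by simp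
next
  case (Suc m)
  then obtain q where q: "(\<Sum>i<m. q i * f i) = Gcd (f ` {..<m})" by blast
  obtain u v where uv: "u * f m + v * Gcd (f ` {..<m}) = gcd (f m) (Gcd (f ` {..<m}))"
    using bezout_int by blast
  define q' where "q' = (\<lambda>i. v * q i)(m := u)"
  have "(\<Sum>i<Suc m. q' i * f i) = v * (\<Sum>i<m. q i * f i) + u * f m"
    by (simp add: q'_def sum_distrib_left mult.assoc)
  also have "\<dots> = u * f m + v * Gcd (f ` {..<m})" by (simp add: q)
  also have "\<dots> = Gcd (f ` {..<Suc m})" by (simp add: uv lessThan_Suc)
  finally show ?case by blast
qed

lemma chain_initial_segments:
  assumes "finite U" "card U = m" "\<forall>I\<in>C. I \<subseteq> U" "\<forall>I\<in>C. \<forall>J\<in>C. I \<subseteq> J \<or> J \<subseteq> I"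
  shows "\<exists>\<sigma>. bij_betw \<sigma> {..<m} U \<and> (\<forall>I\<in>C. \<sigma> ` {..<card I} = I)"
  using assms
proof (induction m arbitrary: U C)
  case 0
  then show ?case by (intro exI[of _ "\<lambda>_. undefined"]) (auto simp: bij_betw_def)
next
  case (Suc m)
  define C' where "C' = C - {U}"
  have "\<exists>u\<in>U. \<forall>I\<in>C'. u \<notin> I"
  proof (cases "C' = {}")
    case True
    then show ?thesis using Suc.prems(2) by (auto simp: card_Suc_eq)
  next
    case False
    have "finite C'" using Suc.prems(1,3) finite_Pow_iff unfolding C'_def
      by (meson Diff_subset PowI finite_subset subsetI)
    moreover have "subset.chain UNIV C'" using Suc.prems(4) by (simp add: subset_chain_def C'_def)
    ultimately have "\<Union>C' \<in> C'" using False Union_in_chain by blast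
    then have "\<Union>C' \<subset> U" using Suc.prems(3) unfolding C'_def by blast
    then show ?thesis by blast
  qed
  then obtain u where u: "u \<in> U" "\<forall>I\<in>C'. u \<notin> I" by blast
  have "card (U - {u}) = m" using Suc.prems(2) u(1) by simp
  moreover have "\<forall>I\<in>C'. I \<subseteq> U - {u}" using Suc.prems(3) u(2) unfolding C'_def by blast
  ultimately obtain \<sigma>' where \<sigma>': "bij_betw \<sigma>' {..<m} (U - {u})" "\<forall>I\<in>C'. \<sigma>' ` {..<card I} = I"
    using Suc.IH[of "U - {u}" C'] Suc.prems(1,4) unfolding C'_def by blast
  define \<sigma> where "\<sigma> = \<sigma>'(m := u)"
  have image_\<sigma>: "\<sigma> ` {..<j} = \<sigma>' ` {..<j}" if "j \<le> m" for j
    using that by (auto simp: \<sigma>_def)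
  have "\<sigma> ` {..<Suc m} = insert u (\<sigma>' ` {..<m})"
    by (simp add: lessThan_Suc image_\<sigma>) (simp add: \<sigma>_def)
  also have "\<dots> = U" using \<sigma>'(1) u(1) unfolding bij_betw_def by blast
  finally have image_U: "\<sigma> ` {..<Suc m} = U" .
  then have "bij_betw \<sigma> {..<Suc m} U"
    unfolding bij_betw_def using Suc.prems(2) by (simp add: inj_on_iff_eq_card)
  moreover have "\<sigma> ` {..<card I} = I" if I: "I \<in> C" for I
  proof (cases "I = U")
    case False
    then have "I \<in> C'" using I by (simp add: C'_def)
    moreover have "card I \<le> m"
      using \<open>\<forall>I\<in>C'. I \<subseteq> U - {u}\<close> \<open>card (U - {u}) = m\<close> Suc.prems(1) calculation
      by (metis card_mono finite_Diff)
    ultimately show ?thesis using image_\<sigma> \<sigma>'(2) by simp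
  qed (use image_U Suc.prems(2) in simp)
  ultimately show ?case by blast
qed

lemma delone_subset_Lam: "0 < k \<Longrightarrow> T \<in> delone k \<Longrightarrow> T \<subseteq> Lam k"
  by (erule delone_cases) (auto intro!: vadd_in_Lam aset_in_Lam)

lemma permutes_image_lessThan_subset:
  fixes \<sigma> :: "nat \<Rightarrow> nat"
  assumes "\<sigma> permutes {..<k}" "m \<le> k"
  shows "\<sigma> ` {..<m} \<subseteq> {..<k}"
proof
  fix y assume "y \<in> \<sigma> ` {..<m}"
  then obtain j where "j < m" "y = \<sigma> j" by blast
  moreover from \<open>j < m\<close> assms(2) have "j < k" by linarith
  ultimately show "y \<in> {..<k}" using permutes_in_image[OF assms(1), of j] by simp
qed

lemma sum_permutes_image_lessThan:
  fixes \<sigma> :: "nat \<Rightarrow> nat"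
  assumes "\<sigma> permutes {..<k}"
  shows "sum f (\<sigma> ` {..<m}) = (\<Sum>j<m. f (\<sigma> j))"
  using permutes_inj[OF assms] by (simp add: sum.reindex inj_on_subset)

context tonnetz_params
begin

lemma exists_bezout_coeffs: "\<exists>q. (\<Sum>i<k. q i * l i) = 1"
  using bezout_Gcd_image[where f = l and m = k] l_reduced unfolding reduced_def by simp

definition bezout_coeffs :: "nat \<Rightarrow> int" where
  "bezout_coeffs = (SOME q. (\<Sum>i<k. q i * l i) = 1)"

lemma sum_bezout_coeffs: "(\<Sum>i<k. bezout_coeffs i * l i) = 1"
  unfolding bezout_coeffs_def using someI_ex[OF exists_bezout_coeffs] .

definition lift :: "int \<Rightarrow> nat \<Rightarrow> int" where
  "lift x = avec_comb k (\<lambda>i. x * bezout_coeffs i)"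

lemma lift_in_Lam: "lift x \<in> Lam k"
  unfolding lift_def Lam_eq by blast

lemma cover_lift:
  assumes "x \<in> {0..<n}"
  shows "cover (lift x) = x"
proof -
  have "(\<Sum>i<k. x * bezout_coeffs i * l i) = x"
    using sum_bezout_coeffs by (simp add: mult.assoc flip: sum_distrib_left)
  then show ?thesis using assms by (simp add: lift_def cover_avec_comb)
qed

lemma orbit_lift_cover: "t \<in> Lam k \<Longrightarrow> orbit deck (lift (cover t)) = orbit deck t"
  using orbit_eq_iff_cover_eq[OF lift_in_Lam] cover_lift cover_range by simp

lemma cover_vadd_aset:
  assumes "z \<in> Lam k" "I \<subseteq> {..<k}"
  shows "cover (vadd z (aset k I)) = (cover z + sum l I) mod n"
proof -
  have "(\<Sum>i<k. (if i \<in> I then 1 else 0) * l i) = sum l ({..<k} \<inter> I)"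
    by (simp add: sum.inter_restrict[symmetric] if_distrib[of "\<lambda>c. c * _"] cong: if_cong)
  also have "{..<k} \<inter> I = I" using assms(2) by blast
  finally have "cover (aset k I) = sum l I mod n"
    using assms(2) by (simp add: aset_eq_avec_comb cover_avec_comb)
  then show ?thesis
    using cover_vadd[OF assms(1) aset_in_Lam[OF k_pos assms(2)]] by (simp add: mod_add_right_eq)
qed

lemma cover_vadd_aset_initial_segment:
  assumes "z \<in> Lam k" "\<sigma> permutes {..<k}" "m \<le> k"
  shows "cover (vadd z (aset k (\<sigma> ` {..<m}))) = (cover z + (\<Sum>j<m. l (\<sigma> j))) mod n"
  using cover_vadd_aset[OF assms(1) permutes_image_lessThan_subset[OF assms(2,3)]]
  by (simp add: sum_permutes_image_lessThan[OF assms(2)])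

lemma tonn_simplex_is_cover_image:
  assumes "S \<in> tonn n k l"
  shows "\<exists>T\<in>delone k. S = cover ` T"
proof -
  obtain x \<sigma> where x: "x \<in> {0..<n}" and \<sigma>: "\<sigma> permutes {..<k}" and "S \<noteq> {}"
    and S_sub: "S \<subseteq> tonn_max n k l x \<sigma>"
    using assms unfolding tonn_def by blast
  define vertex where "vertex = (\<lambda>m. (x + (\<Sum>j<m. l (\<sigma> j))) mod n)"
  define M where "M = {m. m < k \<and> vertex m \<in> S}"
  define C where "C = (\<lambda>m. \<sigma> ` {..<m}) ` M"
  define T where "T = (\<lambda>I. vadd (lift x) (aset k I)) ` C"
  have S_eq: "S = vertex ` M"
    using S_sub unfolding M_def tonn_max_def vertex_def by blast
  have proper: "\<forall>I\<in>C. I \<subset> {..<k}"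
  proof
    fix I assume "I \<in> C"
    then obtain m where m: "m < k" "I = \<sigma> ` {..<m}" unfolding C_def M_def by blast
    then have "card I = m" using permutes_inj[OF \<sigma>] by (simp add: card_image inj_on_subset)
    then show "I \<subset> {..<k}" using m permutes_image_lessThan_subset[OF \<sigma>, of m] by fastforce
  qed
  have chain: "\<forall>I\<in>C. \<forall>J\<in>C. I \<subseteq> J \<or> J \<subseteq> I"
  proof (intro ballI)
    fix I J assume "I \<in> C" "J \<in> C"
    then obtain m m' where "I = \<sigma> ` {..<m}" "J = \<sigma> ` {..<m'}" unfolding C_def by blast
    then show "I \<subseteq> J \<or> J \<subseteq> I" by (cases "m \<le> m'") (auto intro: image_mono)
  qed
  have "C \<noteq> {}" using \<open>S \<noteq> {}\<close> S_eq by (simp add: C_def)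
  then have "T \<in> delone k"
    unfolding T_def using image_vadd_aset_in_delone[OF lift_in_Lam _ proper chain] by blast
  moreover have "cover (vadd (lift x) (aset k (\<sigma> ` {..<m}))) = vertex m" if "m \<in> M" for m
    using cover_vadd_aset_initial_segment[OF lift_in_Lam \<sigma>, of m] cover_lift[OF x] that
    by (simp add: M_def vertex_def)
  then have "cover ` T = vertex ` M"
    unfolding T_def C_def image_image by (intro image_cong) auto
  ultimately show ?thesis using S_eq by blast
qed

lemma cover_image_delone_in_tonn:
  assumes "T \<in> delone k"
  shows "cover ` T \<in> tonn n k l"
proof -
  obtain z C where T: "T = (\<lambda>I. vadd z (aset k I)) ` C" "z \<in> Lam k" "C \<noteq> {}"
    "\<forall>I\<in>C. I \<subset> {..<k}" "\<forall>I\<in>C. \<forall>J\<in>C. I \<subseteq> J \<or> J \<subseteq> I"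
    using assms by (rule delone_cases)
  obtain \<sigma>0 where \<sigma>0: "bij_betw \<sigma>0 {..<k} {..<k}" "\<forall>I\<in>C. \<sigma>0 ` {..<card I} = I"
    using chain_initial_segments[of "{..<k}" k C] T(4,5) by auto
  define \<sigma> where "\<sigma> = (\<lambda>x. if x < k then \<sigma>0 x else x)"
  have "bij_betw \<sigma> {..<k} {..<k}"
    using \<sigma>0(1) by (rule bij_betw_cong[THEN iffD1, rotated]) (simp add: \<sigma>_def)
  then have \<sigma>: "\<sigma> permutes {..<k}" by (rule bij_imp_permutes) (simp add: \<sigma>_def)
  have card_less: "card I < k" if "I \<in> C" for I
    using T(4) that psubset_card_mono[of "{..<k}" I] by fastforce
  have initial: "\<sigma> ` {..<card I} = I" if "I \<in> C" for I
    using \<sigma>0(2) that card_less[OF that] by (auto simp: \<sigma>_def)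
  have "cover t \<in> tonn_max n k l (cover z) \<sigma>" if "t \<in> T" for t
  proof -
    obtain I where I: "I \<in> C" "t = vadd z (aset k I)" using \<open>t \<in> T\<close> T(1) by blast
    then have "cover t = (cover z + (\<Sum>j<card I. l (\<sigma> j))) mod n"
      using cover_vadd_aset_initial_segment[OF T(2) \<sigma>, of "card I"] card_less[OF I(1)]
        initial[OF I(1)] by simp
    then show ?thesis unfolding tonn_max_def using card_less[OF I(1)] by blast
  qed
  moreover have "cover ` T \<noteq> {}" using T(1,3) by simp
  ultimately show ?thesis unfolding tonn_def using cover_range \<sigma> by blast
qed

lemma inj_on_orbit_lift: "inj_on (\<lambda>x. orbit deck (lift x)) {0..<n}"
proof (rule inj_onI)
  fix x y assume "x \<in> {0..<n}" "y \<in> {0..<n}" "orbit deck (lift x) = orbit deck (lift y)"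
  then show "x = y" using orbit_eq_iff_cover_eq[OF lift_in_Lam lift_in_Lam] cover_lift by simp
qed

lemma orbit_lift_image_eq_iff:
  assumes "S \<subseteq> {0..<n}" "T \<subseteq> Lam k"
  shows "(\<lambda>x. orbit deck (lift x)) ` S = orbit deck ` T \<longleftrightarrow> S = cover ` T"
proof -
  have "orbit deck ` T = (\<lambda>x. orbit deck (lift x)) ` (cover ` T)"
    unfolding image_image using orbit_lift_cover assms(2) by (intro image_cong) auto
  moreover have "cover ` T \<subseteq> {0..<n}" using cover_range by blast
  ultimately show ?thesis using inj_on_image_eq_iff[OF inj_on_orbit_lift assms(1)] by simp
qed

lemma simplicial_iso_tonn_quotient:
  "simplicial_iso {0..<n} (tonn n k l) (quot_vertices deck (Lam k)) (quot_simplices deck (delone k))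
     (\<lambda>x. orbit deck (lift x))"
  unfolding simplicial_iso_def quot_vertices_def quot_simplices_def
proof (intro conjI allI impI)
  have "x \<in> cover ` Lam k" if "x \<in> {0..<n}" for x
    using cover_lift[OF that] lift_in_Lam by (metis image_eqI)
  then have "{0..<n} = cover ` Lam k" using cover_range by blast
  then have "(\<lambda>x. orbit deck (lift x)) ` {0..<n} = orbit deck ` Lam k"
    using orbit_lift_image_eq_iff[of "{0..<n}" "Lam k"] by simp
  then show "bij_betw (\<lambda>x. orbit deck (lift x)) {0..<n} (orbit deck ` Lam k)"
    using inj_on_orbit_lift by (simp add: bij_betw_def)
next
  fix S assume S: "S \<subseteq> {0..<n}"
  have "S \<in> tonn n k l \<longleftrightarrow> (\<exists>T\<in>delone k. S = cover ` T)"
    by (metis tonn_simplex_is_cover_image cover_image_delone_in_tonn)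
  also have "\<dots> \<longleftrightarrow> (\<exists>T\<in>delone k. (\<lambda>x. orbit deck (lift x)) ` S = orbit deck ` T)"
    by (rule bex_cong[OF refl]) (simp add: orbit_lift_image_eq_iff[OF S delone_subset_Lam[OF k_pos]])
  finally show "S \<in> tonn n k l \<longleftrightarrow>
      (\<lambda>x. orbit deck (lift x)) ` S \<in> {orbit deck ` T | T. T \<in> delone k}"
    by blast
qed

end

section \<open>The image of \<open>\<omega>\<close>\<close>

lemma cycle_displacement_eq_0:
  fixes c :: "int \<times> int \<Rightarrow> int"
  assumes "\<forall>w\<in>U. (\<Sum>u\<in>U. c (u, w)) - (\<Sum>v\<in>U. c (w, v)) = 0"
  shows "(\<Sum>u\<in>U. \<Sum>v\<in>U. c (u, v) * (v - u)) = 0"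
proof -
  have "(\<Sum>u\<in>U. \<Sum>v\<in>U. c (u, v) * v) = (\<Sum>w\<in>U. w * (\<Sum>u\<in>U. c (u, w)))"
    by (subst sum.swap) (simp add: sum_distrib_left mult.commute)
  moreover have "(\<Sum>u\<in>U. \<Sum>v\<in>U. c (u, v) * u) = (\<Sum>w\<in>U. w * (\<Sum>v\<in>U. c (w, v)))"
    by (simp add: sum_distrib_left mult.commute)
  ultimately have "(\<Sum>u\<in>U. \<Sum>v\<in>U. c (u, v) * (v - u))
      = (\<Sum>w\<in>U. w * ((\<Sum>u\<in>U. c (u, w)) - (\<Sum>v\<in>U. c (w, v))))"
    by (simp add: right_diff_distrib sum_subtractf)
  also have "\<dots> = 0" using assms by simp
  finally show ?thesis .
qed

lemma sum_swap3:
  "(\<Sum>u\<in>A. \<Sum>v\<in>B. \<Sum>i\<in>C. f u v i) = (\<Sum>i\<in>C. \<Sum>u\<in>A. \<Sum>v\<in>B. f u v i)"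
proof -
  have "(\<Sum>u\<in>A. \<Sum>v\<in>B. \<Sum>i\<in>C. f u v i) = (\<Sum>u\<in>A. \<Sum>i\<in>C. \<Sum>v\<in>B. f u v i)"
    by (rule sum.cong[OF refl], rule sum.swap)
  also have "\<dots> = (\<Sum>i\<in>C. \<Sum>u\<in>A. \<Sum>v\<in>B. f u v i)" by (rule sum.swap)
  finally show ?thesis .
qed

context tonnetz_params
begin

lemma sum_l_bounds:
  assumes "I \<subseteq> {..<k}" "I \<noteq> {}"
  shows "0 < sum l I" "sum l I \<le> n"
proof -
  have "finite I" using assms(1) finite_subset by blast
  then show "0 < sum l I" using assms l_pos by (intro sum_pos) auto
  show "sum l I \<le> n"
    unfolding n_eq_sum using assms(1) l_pos by (intro sum_mono2) (auto intro: less_imp_le)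
qed

lemma sum_l_mod_inj:
  assumes "I \<subseteq> {..<k}" "I \<noteq> {}" "J \<subseteq> {..<k}" "J \<noteq> {}"
    and "sum l I mod n = sum l J mod n" "sum l I mod n \<noteq> 0"
  shows "I = J"
proof -
  have "sum l I mod n = sum l I" "sum l J mod n = sum l J"
    using sum_l_bounds[OF assms(1,2)] sum_l_bounds[OF assms(3,4)] assms(5,6)
    by (auto simp: le_less)
  with assms(5) have "sum l I = sum l J" by simp
  then show ?thesis using l_generic assms(1,3) unfolding generic_def by blast
qed

lemma tonn_edge_diff_eq_subset_sum:
  assumes "u \<in> {0..<n}" "v \<in> {0..<n}" "u \<noteq> v" "{u, v} \<in> tonn n k l"
  shows "\<exists>I. I \<subseteq> {..<k} \<and> I \<noteq> {} \<and> (v - u) mod n = sum l I mod n"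
proof -
  obtain x \<sigma> where \<sigma>: "\<sigma> permutes {..<k}" and sub: "{u, v} \<subseteq> tonn_max n k l x \<sigma>"
    using assms(4) unfolding tonn_def by blast
  define vertex where "vertex = (\<lambda>m. (x + (\<Sum>j<m. l (\<sigma> j))) mod n)"
  obtain m1 m2 where m: "m1 < k" "u = vertex m1" "m2 < k" "v = vertex m2"
    using sub unfolding tonn_max_def vertex_def by blast
  have segment: "(vertex b - vertex a) mod n = sum l (\<sigma> ` {a..<b}) mod n \<and> \<sigma> ` {a..<b} \<subseteq> {..<k}"
    if "a \<le> b" "b < k" for a b
  proof
    have "(\<Sum>j<b. l (\<sigma> j)) = (\<Sum>j<a. l (\<sigma> j)) + (\<Sum>j\<in>{a..<b}. l (\<sigma> j))"
      using sum.atLeastLessThan_concat[of 0 a b "\<lambda>j. l (\<sigma> j)"] that by (simp add: atLeast0LessThan)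
    moreover have "sum l (\<sigma> ` {a..<b}) = (\<Sum>j\<in>{a..<b}. l (\<sigma> j))"
      using permutes_inj[OF \<sigma>] by (simp add: sum.reindex inj_on_subset)
    ultimately show "(vertex b - vertex a) mod n = sum l (\<sigma> ` {a..<b}) mod n"
      unfolding vertex_def by (simp add: mod_diff_eq)
    show "\<sigma> ` {a..<b} \<subseteq> {..<k}"
      using permutes_image_lessThan_subset[OF \<sigma>, of b] that by (auto simp: lessThan_atLeast0)
  qed
  show ?thesis
  proof (cases "m1 < m2")
    case True
    then show ?thesis using segment[of m1 m2] m by (intro exI[of _ "\<sigma> ` {m1..<m2}"]) auto
  next
    case False
    then have "m2 < m1" using m assms(3) by (metis linorder_neqE_nat)
    define I where "I = {..<k} - \<sigma> ` {m2..<m1}"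
    have "\<sigma> m1 \<notin> \<sigma> ` {m2..<m1}"
      using permutes_inj[OF \<sigma>] by (auto simp: inj_eq)
    then have "\<sigma> m1 \<in> I" using permutes_in_image[OF \<sigma>] m(1) by (simp add: I_def)
    moreover have "(v - u) mod n = sum l I mod n"
    proof -
      let ?s = "sum l (\<sigma> ` {m2..<m1})"
      have "(u - v) mod n = ?s mod n" using segment[of m2 m1] \<open>m2 < m1\<close> m by simp
      then have "(- (u - v)) mod n = (- ?s) mod n" by (rule mod_minus_cong)
      also have "(- ?s) mod n = (n - ?s) mod n"
        by (metis add.commute diff_conv_add_uminus mod_add_self2)
      also have "n - ?s = sum l I"
        using segment[of m2 m1] \<open>m2 < m1\<close> m(1) by (simp add: I_def n_eq_sum sum_diff)
      finally show ?thesis by simp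
    qed
    moreover have "I \<subseteq> {..<k}" by (simp add: I_def)
    ultimately show ?thesis by blast
  qed
qed

definition edge_set :: "int \<Rightarrow> int \<Rightarrow> nat set" where
  "edge_set u v = (THE I. I \<subseteq> {..<k} \<and> I \<noteq> {} \<and> (v - u) mod n = (\<Sum>j\<in>I. l j) mod n)"

lemma omega_eq_aset_edge_set: "omega n k l u v = aset k (edge_set u v)"
  by (simp add: omega_def edge_set_def)

lemma edge_set_spec:
  assumes "u \<in> {0..<n}" "v \<in> {0..<n}" "u \<noteq> v" "{u, v} \<in> tonn n k l"
  shows "edge_set u v \<subseteq> {..<k}" "(v - u) mod n = sum l (edge_set u v) mod n"
proof -
  have "(v - u) mod n \<noteq> 0"
    using assms(1-3) dvd_imp_le_int[of "v - u" n] by (auto simp: mod_eq_0_iff_dvd)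
  then have "\<exists>!I. I \<subseteq> {..<k} \<and> I \<noteq> {} \<and> (v - u) mod n = sum l I mod n"
    using tonn_edge_diff_eq_subset_sum[OF assms] sum_l_mod_inj by metis
  from theI'[OF this] show "edge_set u v \<subseteq> {..<k}" "(v - u) mod n = sum l (edge_set u v) mod n"
    unfolding edge_set_def by auto
qed

lemma cycle_edge_set:
  assumes "c \<in> tonn_cycles n k l" "c (u, v) \<noteq> 0"
  shows "edge_set u v \<subseteq> {..<k} \<and> (v - u) mod n = sum l (edge_set u v) mod n"
  using assms edge_set_spec[of u v] unfolding tonn_cycles_def by fastforce

definition edge_coeffs :: "(int \<times> int \<Rightarrow> int) \<Rightarrow> nat \<Rightarrow> int" where
  "edge_coeffs c i = (\<Sum>u\<in>{0..<n}. \<Sum>v\<in>{0..<n}. c (u, v) * of_bool (i \<in> edge_set u v))"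

lemma omega_eval_cycle:
  assumes c: "c \<in> tonn_cycles n k l"
  shows "omega_eval n k l c = avec_comb k (edge_coeffs c)"
proof -
  let ?U = "{0..<n}" and ?E = "\<lambda>u v i. of_bool (i \<in> edge_set u v) :: int"
  have edge_term: "c (u, v) * omega n k l u v j = (\<Sum>i<k. c (u, v) * ?E u v i * avec k i j)" for u v j
    using cycle_edge_set[OF c, of u v]
    by (cases "c (u, v) = 0")
      (simp_all add: omega_eq_aset_edge_set aset_eq_avec_comb avec_comb_def sum_distrib_left
        mult.assoc of_bool_def)
  have "omega_eval n k l c j = (\<Sum>i<k. edge_coeffs c i * avec k i j)" for j
  proof -
    have "omega_eval n k l c j = (\<Sum>u\<in>?U. \<Sum>v\<in>?U. \<Sum>i<k. c (u, v) * ?E u v i * avec k i j)"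
      by (simp add: omega_eval_def edge_term)
    also have "\<dots> = (\<Sum>i<k. \<Sum>u\<in>?U. \<Sum>v\<in>?U. c (u, v) * ?E u v i * avec k i j)"
      by (rule sum_swap3)
    finally show ?thesis unfolding edge_coeffs_def sum_distrib_right .
  qed
  then show ?thesis by (simp add: fun_eq_iff avec_comb_def)
qed

lemma n_dvd_sum_edge_coeffs:
  assumes c: "c \<in> tonn_cycles n k l"
  shows "n dvd (\<Sum>i<k. edge_coeffs c i * l i)"
proof -
  let ?U = "{0..<n}" and ?E = "\<lambda>u v i. of_bool (i \<in> edge_set u v) :: int"
  have edge_sum: "(\<Sum>i<k. c (u, v) * (?E u v i * l i)) = c (u, v) * sum l (edge_set u v)" for u v
    using cycle_edge_set[OF c, of u v]
    by (cases "c (u, v) = 0") (simp_all add: sum_distrib_left[symmetric] Int_absorb1)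
  have "(\<Sum>i<k. edge_coeffs c i * l i) = (\<Sum>i<k. \<Sum>u\<in>?U. \<Sum>v\<in>?U. c (u, v) * (?E u v i * l i))"
    unfolding edge_coeffs_def sum_distrib_right by (simp only: mult.assoc)
  also have "\<dots> = (\<Sum>u\<in>?U. \<Sum>v\<in>?U. \<Sum>i<k. c (u, v) * (?E u v i * l i))"
    by (rule sum_swap3[symmetric])
  also have "\<dots> = (\<Sum>u\<in>?U. \<Sum>v\<in>?U. c (u, v) * sum l (edge_set u v))"
    by (simp only: edge_sum)
  also have "\<dots> = (\<Sum>u\<in>?U. \<Sum>v\<in>?U. c (u, v) * sum l (edge_set u v) - c (u, v) * (v - u))"
  proof -
    have "(\<Sum>u\<in>?U. \<Sum>v\<in>?U. c (u, v) * (v - u)) = 0"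
      using c unfolding tonn_cycles_def by (intro cycle_displacement_eq_0) blast
    then show ?thesis by (simp add: sum_subtractf)
  qed
  finally have sum_eq: "(\<Sum>i<k. edge_coeffs c i * l i)
      = (\<Sum>u\<in>?U. \<Sum>v\<in>?U. c (u, v) * sum l (edge_set u v) - c (u, v) * (v - u))" .
  have "n dvd c (u, v) * sum l (edge_set u v) - c (u, v) * (v - u)" for u v
    using cycle_edge_set[OF c, of u v]
    by (cases "c (u, v) = 0")
      (auto simp: mod_eq_dvd_iff right_diff_distrib[symmetric] dvd_diff_commute[of n "v - u"])
  then have "n dvd (\<Sum>u\<in>?U. \<Sum>v\<in>?U. c (u, v) * sum l (edge_set u v) - c (u, v) * (v - u))"
    by (intro dvd_sum)
  then show ?thesis unfolding sum_eq .
qed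

lemma omega_eval_in_deck:
  assumes "c \<in> tonn_cycles n k l"
  shows "omega_eval n k l c \<in> deck"
proof -
  obtain p0 where "(\<Sum>i<k. edge_coeffs c i * l i) = n * p0"
    using n_dvd_sum_edge_coeffs[OF assms] by (elim dvdE)
  then have "(\<Sum>i<k. edge_coeffs c i * l i) = p0 * n" by simp
  then show ?thesis unfolding deck_def omega_eval_cycle[OF assms] by blast
qed

end

lemma sum_list_concat_replicate:
  "sum_list (map f (concat (map (\<lambda>i. replicate (r i) i) [0..<m]))) = (\<Sum>i<m. of_nat (r i) * f i)"
  by (induction m) (simp_all add: sum_list_replicate)

definition chain_boundary :: "int \<Rightarrow> (int \<times> int \<Rightarrow> int) \<Rightarrow> int \<Rightarrow> int" where
  "chain_boundary n c w = (\<Sum>u\<in>{0..<n}. c (u, w)) - (\<Sum>v\<in>{0..<n}. c (w, v))"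

text \<open>The edge from \<open>x\<close> to \<open>y\<close> as a 1-chain in the orientation \<open>u < v\<close> of \<open>tonn_cycles\<close>.\<close>
definition oriented_edge :: "int \<Rightarrow> int \<Rightarrow> int \<times> int \<Rightarrow> int" where
  "oriented_edge x y e = (if x < y then of_bool (e = (x, y)) else - of_bool (e = (y, x)))"

lemma chain_boundary_add:
  "chain_boundary n (\<lambda>e. c e + d e) w = chain_boundary n c w + chain_boundary n d w"
  by (simp add: chain_boundary_def sum.distrib)

lemma omega_eval_add:
  "omega_eval n k l (\<lambda>e. c e + d e) = (\<lambda>j. omega_eval n k l c j + omega_eval n k l d j)"
  by (simp add: omega_eval_def distrib_right sum.distrib fun_eq_iff)

lemma sum_sum_of_bool_pair:
  assumes "x \<in> A" "y \<in> B" "finite A" "finite B"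
  shows "(\<Sum>u\<in>A. \<Sum>v\<in>B. of_bool ((u, v) = (x, y)) * f u v) = (f x y :: 'a::comm_ring_1)"
proof -
  have "(\<Sum>v\<in>B. of_bool ((u, v) = (x, y)) * f u v) = of_bool (u = x) * f u y" for u
    using assms by (auto simp: of_bool_def if_distrib[of "\<lambda>c. c * _"] cong: if_cong)
  then show ?thesis using assms by (simp add: of_bool_def if_distrib[of "\<lambda>c. c * _"] cong: if_cong)
qed

lemma chain_boundary_oriented_edge:
  assumes "x \<in> {0..<n}" "y \<in> {0..<n}" "x \<noteq> y"
  shows "chain_boundary n (oriented_edge x y) w = of_bool (w = y) - of_bool (w = x)"
  using assms
  by (cases "x < y"; cases "w = y"; cases "w = x")
    (simp_all add: chain_boundary_def oriented_edge_def sum_negf)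

lemma omega_eval_oriented_edge:
  assumes "x \<in> {0..<n}" "y \<in> {0..<n}"
  shows "omega_eval n k l (oriented_edge x y)
    = (if x < y then omega n k l x y else (\<lambda>j. - omega n k l y x j))"
proof -
  note pair = sum_sum_of_bool_pair[OF _ _ finite_atLeastLessThan_int finite_atLeastLessThan_int]
  show ?thesis
  proof (cases "x < y")
    case True
    then have "omega_eval n k l (oriented_edge x y) j = omega n k l x y j" for j
      unfolding omega_eval_def oriented_edge_def by (simp only: if_True pair[OF assms])
    then show ?thesis using True by (simp add: fun_eq_iff)
  next
    case False
    then have "omega_eval n k l (oriented_edge x y) j = - omega n k l y x j" for j
      unfolding omega_eval_def oriented_edge_def
      by (simp only: if_False mult_minus_left sum_negf pair[OF assms(2,1)])
    then show ?thesis using False by (simp add: fun_eq_iff)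
  qed
qed

lemma oriented_edge_nonzero:
  assumes "oriented_edge x y (a, b) \<noteq> 0" "x \<noteq> y"
  shows "a < b \<and> {a, b} = {x, y}"
proof (cases "x < y")
  case True
  then have "(a, b) = (x, y)" using assms(1) by (simp add: oriented_edge_def split: if_splits)
  then show ?thesis using True by simp
next
  case False
  then have "(a, b) = (y, x)" using assms(1) by (simp add: oriented_edge_def split: if_splits)
  then show ?thesis using False assms(2) by auto
qed

lemma aset_singleton: "aset k {i} = avec k i"
  by (simp add: aset_def fun_eq_iff)

lemma aset_remove:
  assumes "i < k"
  shows "aset k ({..<k} - {i}) = (\<lambda>j. - avec k i j)"
  using assms by (simp add: aset_def fun_eq_iff sum_diff1 sum_avec_eq_0)

context tonnetz_params
begin

lemma edge_set_eqI:
  assumes "I \<subseteq> {..<k}" "I \<noteq> {}" "(v - u) mod n = sum l I mod n" "(v - u) mod n \<noteq> 0"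
  shows "edge_set u v = I"
  unfolding edge_set_def
proof (rule the_equality)
  show "I \<subseteq> {..<k} \<and> I \<noteq> {} \<and> (v - u) mod n = sum l I mod n" using assms by simp
  show "J = I" if "J \<subseteq> {..<k} \<and> J \<noteq> {} \<and> (v - u) mod n = sum l J mod n" for J
    using that sum_l_mod_inj[OF assms(1,2)] assms(3,4) by metis
qed

definition step :: "int \<Rightarrow> nat \<Rightarrow> int" where
  "step x i = (x + l i) mod n"

lemma step_range: "step x i \<in> {0..<n}"
  using n_pos by (simp add: step_def)

lemma step_neq:
  assumes "x \<in> {0..<n}" "i < k"
  shows "step x i \<noteq> x"
proof
  assume "step x i = x"
  with assms(1) have "(x + l i) mod n = x mod n" by (simp add: step_def)
  then have "n dvd (x + l i) - x" by (simp only: mod_eq_dvd_iff)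
  then have "n dvd l i" by simp
  then show False using l_less_n[OF assms(2)] l_pos assms(2) zdvd_imp_le by fastforce
qed

lemma step_edge_in_tonn:
  assumes "x \<in> {0..<n}" "i < k"
  shows "{x, step x i} \<in> tonn n k l"
proof -
  define \<sigma> where "\<sigma> = Transposition.transpose 0 i"
  have \<sigma>: "\<sigma> permutes {..<k}" unfolding \<sigma>_def using k_pos assms(2) by (intro permutes_swap_id) auto
  have "x \<in> tonn_max n k l x \<sigma>"
    unfolding tonn_max_def using assms(1) k_pos by (intro CollectI exI[of _ 0]) simp
  moreover have "step x i \<in> tonn_max n k l x \<sigma>"
    unfolding tonn_max_def using two_le_k by (intro CollectI exI[of _ 1]) (simp add: step_def \<sigma>_def)
  ultimately show ?thesis unfolding tonn_def using assms(1) \<sigma> by blast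
qed

lemma omega_eval_step_edge:
  assumes "x \<in> {0..<n}" "i < k"
  shows "omega_eval n k l (oriented_edge x (step x i)) = avec k i"
proof (cases "x < step x i")
  case True
  have "(step x i - x) mod n = sum l {i} mod n" by (simp add: step_def mod_diff_left_eq)
  moreover have "(step x i - x) mod n \<noteq> 0"
    using True assms(1) step_range[of x i] dvd_imp_le_int[of "step x i - x" n]
    by (auto simp: mod_eq_0_iff_dvd)
  ultimately have "edge_set x (step x i) = {i}" using assms(2) by (intro edge_set_eqI) auto
  then show ?thesis
    using True assms(1) step_range by (simp add: omega_eval_oriented_edge omega_eq_aset_edge_set aset_singleton)
next
  case False
  then have less: "step x i < x" using step_neq[OF assms] by simp
  define I where "I = {..<k} - {i}"
  have "\<exists>j<k. j \<noteq> i" using two_le_k by (intro exI[of _ "if i = 0 then 1 else 0"]) auto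
  then have "I \<noteq> {}" by (auto simp: I_def)
  have "(x - step x i) mod n = (- l i) mod n" unfolding step_def by (simp add: mod_diff_right_eq)
  also have "\<dots> = (n - l i) mod n" by (metis add.commute diff_conv_add_uminus mod_add_self2)
  also have "n - l i = sum l I" using assms(2) by (simp add: I_def n_eq_sum sum_diff1)
  finally have "(x - step x i) mod n = sum l I mod n" .
  moreover have "(x - step x i) mod n \<noteq> 0"
    using less assms(1) step_range[of x i] dvd_imp_le_int[of "x - step x i" n]
    by (auto simp: mod_eq_0_iff_dvd)
  moreover have "I \<subseteq> {..<k}" by (simp add: I_def)
  ultimately have "edge_set (step x i) x = I"
    using \<open>I \<noteq> {}\<close> by (intro edge_set_eqI)
  then show ?thesis
    using False assms step_range
    by (simp add: omega_eval_oriented_edge omega_eq_aset_edge_set aset_remove I_def)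
qed

primrec walk :: "int \<Rightarrow> nat list \<Rightarrow> int \<times> int \<Rightarrow> int" where
  "walk x [] = (\<lambda>_. 0)"
| "walk x (i # is) = (\<lambda>e. oriented_edge x (step x i) e + walk (step x i) is e)"

lemma walk_support:
  assumes "x \<in> {0..<n}" "set is \<subseteq> {..<k}" "walk x is (a, b) \<noteq> 0"
  shows "a \<in> {0..<n} \<and> b \<in> {0..<n} \<and> a < b \<and> {a, b} \<in> tonn n k l"
  using assms
proof (induction "is" arbitrary: x)
  case (Cons i "is")
  show ?case
  proof (cases "oriented_edge x (step x i) (a, b) = 0")
    case True
    then show ?thesis using Cons.IH[OF step_range] Cons.prems(2,3) by simp
  next
    case False
    moreover have "x \<noteq> step x i" using Cons.prems(1,2) step_neq[of x i] by fastforce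
    ultimately have "a < b" "{a, b} = {x, step x i}" using oriented_edge_nonzero by blast+
    moreover have "{x, step x i} \<in> tonn n k l" using Cons.prems(1,2) by (intro step_edge_in_tonn) auto
    ultimately show ?thesis using Cons.prems(1) step_range by (auto simp: doubleton_eq_iff insert_commute)
  qed
qed simp

lemma chain_boundary_walk:
  assumes "x \<in> {0..<n}" "set is \<subseteq> {..<k}"
  shows "chain_boundary n (walk x is) w = of_bool (w = (x + sum_list (map l is)) mod n) - of_bool (w = x)"
  using assms
proof (induction "is" arbitrary: x)
  case Nil
  then show ?case by (simp add: chain_boundary_def)
next
  case (Cons i "is")
  have "(step x i + sum_list (map l is)) mod n = (x + sum_list (map l (i # is))) mod n"
    by (simp add: step_def mod_add_left_eq add.assoc)
  then show ?case
    using Cons.IH[OF step_range] Cons.prems step_neq[of x i] step_range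
    by (simp add: chain_boundary_add chain_boundary_oriented_edge)
qed

lemma omega_eval_walk:
  assumes "x \<in> {0..<n}" "set is \<subseteq> {..<k}"
  shows "omega_eval n k l (walk x is) = (\<lambda>j. sum_list (map (\<lambda>i. avec k i j) is))"
  using assms
proof (induction "is" arbitrary: x)
  case Nil
  then show ?case by (simp add: omega_eval_def fun_eq_iff)
next
  case (Cons i "is")
  then show ?case
    using Cons.IH[OF step_range] omega_eval_step_edge by (simp add: omega_eval_add)
qed

lemma deck_subset_LamL: "deck \<subseteq> LamL n k l"
proof
  fix y assume "y \<in> deck"
  then obtain p p0 where y: "y = avec_comb k p" and p: "(\<Sum>i<k. p i * l i) = p0 * n"
    unfolding deck_def by blast
  define t where "t = (\<Sum>i<k. \<bar>p i\<bar>)"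
  have "\<bar>p i\<bar> \<le> t" if "i < k" for i
    unfolding t_def using that by (intro member_le_sum) auto
  then have nonneg: "0 \<le> p i + t" if "i < k" for i
    using that by fastforce
  have replicate_sum: "(\<Sum>i<k. of_nat (nat (p i + t)) * f i) = (\<Sum>i<k. (p i + t) * f i)"
    for f :: "nat \<Rightarrow> int"
    by (intro sum.cong refl) (simp add: nonneg)
  define "is" where "is = concat (map (\<lambda>i. replicate (nat (p i + t)) i) [0..<k])"
  have is_k: "set is \<subseteq> {..<k}" by (auto simp: is_def)
  have zero: "0 \<in> {0..<n}" using n_pos by simp
  have "sum_list (map l is) = (\<Sum>i<k. (p i + t) * l i)"
    unfolding is_def sum_list_concat_replicate replicate_sum ..
  also have "\<dots> = (p0 + t) * n"
    using p by (simp add: n_eq_sum distrib_right sum.distrib sum_distrib_left algebra_simps)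
  finally have closed: "(0 + sum_list (map l is)) mod n = 0" by simp
  have "walk 0 is \<in> tonn_cycles n k l"
    unfolding tonn_cycles_def
    using walk_support[OF zero is_k] chain_boundary_walk[OF zero is_k] closed
    by (auto simp: chain_boundary_def)
  moreover have "omega_eval n k l (walk 0 is) = (\<lambda>j. sum_list (map (\<lambda>i. avec k i j) is))"
    by (rule omega_eval_walk[OF zero is_k])
  then have "omega_eval n k l (walk 0 is) = avec_comb k (\<lambda>i. p i + t)"
    unfolding is_def sum_list_concat_replicate replicate_sum by (simp add: avec_comb_def)
  ultimately show "y \<in> LamL n k l"
    unfolding LamL_def y avec_comb_add_const by (metis image_eqI)
qed

end

theorem proposition6p1:
  fixes k :: nat and l :: "nat \<Rightarrow> int" and n :: int
  assumes "k \<ge> 2"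
    and "\<forall>i<k. l i > 0"
    and "generic k l"
    and "reduced k l"
    and "n = (\<Sum>i<k. l i)"
  shows "LamL n k l = {(\<lambda>j. \<Sum>i<k. p i * avec k i j) | p :: nat \<Rightarrow> int.
                          \<exists>p0 :: int. (\<Sum>i<k. p i * l i) = p0 * n} \<and>
         free_abelian_rank (LamL n k l) (k - 1) \<and>
         acts_freely_by_translations (LamL n k l) (Lam k) (delone k) \<and>
         (\<exists>f. simplicial_iso {0..<n} (tonn n k l)
                (quot_vertices (LamL n k l) (Lam k)) (quot_simplices (LamL n k l) (delone k)) f)"
proof -
  interpret tonnetz_params k l n
    using assms by unfold_locales
  have "LamL n k l = deck"
    using omega_eval_in_deck deck_subset_LamL unfolding LamL_def by blast
  moreover have "deck = {(\<lambda>j. \<Sum>i<k. p i * avec k i j) | p :: nat \<Rightarrow> int.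
                          \<exists>p0 :: int. (\<Sum>i<k. p i * l i) = p0 * n}"
    unfolding deck_def avec_comb_def ..
  ultimately show ?thesis
    using free_abelian_rank_deck acts_freely_deck simplicial_iso_tonn_quotient by auto
qed

end
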